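(* Assume (H1), (H2) and (H3) from the context hold. Then $\mathcal{T}:\mathcal{A}\to\mathcal{E}_\varrho$ is continuous with respect to the weighted norm $\|\cdot\|_\varrho$.
   Context: Let $N\ge1$ and $D=\mathrm{diag}(d_1,\dots,d_N)$ with $d_i>0$. Vector inequalities are componentwise; $u\gg0$ means all components positive; $[0,r]=\{u:0\le u\le r\}$; $\mathcal{C}_r$ is the set of continuous $\mathbb{R}\to[0,r]$ maps. (H1) - $k^+\gg0$; $f:[0,k^+]\to\mathbb{R}^N$ is continuous and piecewise twice continuously differentiable; solutions of $u_t=Du_{xx}+f(u)$ with data in $\mathcal{C}_{k^+}$ exist globally in $\mathcal{C}_{k^+}$. - $0\ll k^-\le k\le k^+$; continuous piecewise $C^2$ maps $f^\pm:[0,k^\pm]\to\mathbb{R}^N$ satisfy $f^-\le f\le f^+$ on $[0,k^+]$. - $f(0)=f(k)=0$, $f^\pm(0)=f^\pm(k^\pm)=0$, with no other positive equilibria between $0$ and $k$, respectively $k^\pm$. - $f^\pm$ are cooperative on $[0,k^\pm]$ and share with $f$ the Jacobian $f'(0)$ at $0$. (H2) - $A_\lambda=(a^{ij}_\lambda)=\mathrm{diag}(d_i\lambda^2)+f'(0)$ is block lower triangular for $\lambda>0$, with irreducible or $1\times1$ zero diagonal blocks. - Its first block has positive principal eigenvalue $\Psi(A_\lambda)$ (where $\Psi(A)=\rho(A+\alpha I)-\alpha$), strictly larger than those of the other blocks. - An eigenvector $\nu_\lambda=(\nu^i_\lambda)\gg0$ for $\Psi(A_\lambda)$ exists and is continuous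 in $\lambda$. Speeds. $\Phi(\lambda)=\Psi(A_\lambda)/\lambda$ and $c^*=\inf_{\lambda>0}\Phi$. (H3) $f^\pm(\alpha\nu_\lambda)\le\alpha f'(0)\nu_\lambda$ for all $\alpha,\lambda>0$. Setup. Fix $c>c^*$, and let $\Lambda_c$ be the smallest positive solution of $\Phi(\lambda)=c$. The operator $\mathcal{T}$. $\beta>\max\{|\partial_if_j(u)|:u\in[0,k^+]\}$ is a fixed, sufficiently large constant. Set $\lambda_{1i}=\frac{-c+\sqrt{c^2+4\beta d_i}}{2d_i}$ and $\lambda_{2i}=\frac{c+\sqrt{c^2+4\beta d_i}}{2d_i}$, with $\lambda_{2i}>\lambda_{1i}>2\Lambda_c$. Let $H_i(u)=\beta u_i+f_i(u)$ and $$\mathcal{T}_i[u](\xi)=\frac{1}{d_i(\lambda_{1i}+\lambda_{2i})}\Big(\int_{-\infty}^{\xi}e^{-\lambda_{1i}(\xi-s)}H_i(u(s))ds+\int_{\xi}^{\infty}e^{\lambda_{2i}(\xi-s)}H_i(u(s))ds\Big).$$ The functions $\phi^\pm$. $\phi^+_i(\xi)=\min\{k_i,\nu^i_{\Lambda_c}e^{\Lambda_c\xi}\}$ and $\phi^-_i(\xi)=\max\{0,\nu^i_{\Lambda_c}e^{\Lambda_c\xi}-q\nu^i_{\gamma\Lambda_c}e^{\gamma\Lambda_c\xi}\}$, with fixed $\gamma\in(1,2)$ and $q>1$ large enough that $\phi^-<\phi^+$. The space $\mathcal{A}$. Fix $0<\varrho<\Lambda_c$. $\mathcal{E}_\varrho$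 is the Banach space of continuous $u:\mathbb{R}\to\mathbb{R}^N$ with $\|u\|_\varrho=\sum_i\sup_\xi|u_i(\xi)|e^{-\varrho\xi}<\infty$, and $\mathcal{A}=\{u\in\mathcal{E}_\varrho:\phi^-\le u\le\phi^+\}$. *)

theory Defs
  imports "HOL-Analysis.Analysis"
begin

text \<open>Vectors in R^N are modelled as real^'n with 'n a finite (linearly ordered) index type;
  the order on real^'n is the library's componentwise order.  Matrices are real^'n^'n.\<close>

definition vpos :: "real^'n \<Rightarrow> bool" where
  "vpos u \<longleftrightarrow> (\<forall>i. u $ i > 0)"

definition diagv :: "real^'n \<Rightarrow> real^'n \<Rightarrow> real^'n" where
  "diagv d v = (\<chi> i. d $ i * v $ i)"

definition C2 :: "(real^'n \<Rightarrow> real^'n) \<Rightarrow> bool" where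
  "C2 g \<longleftrightarrow> (\<exists>g' g''. (\<forall>x. (g has_derivative blinfun_apply (g' x)) (at x)) \<and>
                     (\<forall>x. (g' has_derivative blinfun_apply (g'' x)) (at x)) \<and>
                     continuous_on UNIV g'')"

definition piecewise_C2_on :: "(real^'n) set \<Rightarrow> (real^'n \<Rightarrow> real^'n) \<Rightarrow> bool" where
  "piecewise_C2_on S f \<longleftrightarrow>
     (\<exists>P. finite P \<and> \<Union>P = S \<and> (\<forall>p\<in>P. closed p \<and> (\<exists>g. C2 g \<and> (\<forall>x\<in>p. f x = g x))))"

definition pd_in :: "(real^'n \<Rightarrow> real^'n) \<Rightarrow> (real^'n) set \<Rightarrow> real^'n \<Rightarrow> 'n \<Rightarrow> 'n \<Rightarrow> real \<Rightarrow> bool" where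
  "pd_in f S u i j D \<longleftrightarrow>
     ((\<lambda>t. f (u + t *\<^sub>R axis i 1) $ j) has_real_derivative D)
        (at 0 within {t. u + t *\<^sub>R axis i 1 \<in> S})"

definition cooperative_on :: "(real^'n) set \<Rightarrow> (real^'n \<Rightarrow> real^'n) \<Rightarrow> bool" where
  "cooperative_on S f \<longleftrightarrow> (\<forall>u\<in>S. \<forall>i j D. i \<noteq> j \<longrightarrow> pd_in f S u j i D \<longrightarrow> D \<ge> 0)"

definition rd_solution ::
  "real^'n \<Rightarrow> (real^'n \<Rightarrow> real^'n) \<Rightarrow> (real \<Rightarrow> real^'n) \<Rightarrow> (real \<Rightarrow> real \<Rightarrow> real^'n) \<Rightarrow> bool" where
  "rd_solution d f u0 u \<longleftrightarrow>
     (\<forall>x. u 0 x = u0 x) \<and>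
     continuous_on ({0..} \<times> UNIV) (\<lambda>(t, x). u t x) \<and>
     (\<forall>t>0. \<forall>x. \<exists>ut ux uxx.
        ((\<lambda>s. u s x) has_vector_derivative ut) (at t) \<and>
        (\<forall>y. (u t has_vector_derivative ux y) (at y)) \<and>
        (ux has_vector_derivative uxx) (at x) \<and>
        ut = diagv d uxx + f (u t x))"

definition global_existence :: "real^'n \<Rightarrow> (real^'n \<Rightarrow> real^'n) \<Rightarrow> real^'n \<Rightarrow> bool" where
  "global_existence d f kp \<longleftrightarrow>
     (\<forall>u0. continuous_on UNIV u0 \<and> (\<forall>x. u0 x \<in> {0..kp}) \<longrightarrow>
        (\<exists>u. rd_solution d f u0 u \<and> (\<forall>t\<ge>0. \<forall>x. u t x \<in> {0..kp})))"

definition cspec :: "real^'n^'n \<Rightarrow> complex set" where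
  "cspec A = {z. det (mat z - (\<chi> i j. complex_of_real (A $ i $ j))) = 0}"

definition srad :: "real^'n^'n \<Rightarrow> real" where
  "srad A = Max (cmod ` cspec A)"

text \<open>Psi(A) = rho(A + alpha I) - alpha, with alpha large (here alpha = sum of |a_ii|, which makes
  A + alpha I nonnegative for the essentially nonnegative matrices considered).\<close>
definition Psi :: "real^'n^'n \<Rightarrow> real" where
  "Psi A = (let \<alpha> = (\<Sum>i\<in>UNIV. \<bar>A $ i $ i\<bar>) in srad (A + \<alpha> *\<^sub>R mat 1) - \<alpha>)"

definition Psi_block :: "'n set \<Rightarrow> real^'n^'n \<Rightarrow> real" where
  "Psi_block B A = (let \<alpha> = (\<Sum>i\<in>B. \<bar>A $ i $ i\<bar>) in
      srad (\<chi> i j. if i \<in> B \<and> j \<in> B then A $ i $ j + (if i = j then \<alpha> else 0) else 0) - \<alpha>)"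

definition irreducible_block :: "'n set \<Rightarrow> real^'n^'n \<Rightarrow> bool" where
  "irreducible_block B A \<longleftrightarrow>
     (\<forall>S. S \<subset> B \<and> S \<noteq> {} \<longrightarrow> (\<exists>i\<in>S. \<exists>j\<in>B - S. A $ i $ j \<noteq> 0))"

definition A_lam :: "real^'n \<Rightarrow> real^'n^'n \<Rightarrow> real \<Rightarrow> real^'n^'n" where
  "A_lam d J lam = (\<chi> i j. (if i = j then d $ i * lam\<^sup>2 else 0) + J $ i $ j)"

definition Phi :: "real^'n \<Rightarrow> real^'n^'n \<Rightarrow> real \<Rightarrow> real" where
  "Phi d J lam = Psi (A_lam d J lam) / lam"

definition cstar :: "real^'n \<Rightarrow> real^'n^'n \<Rightarrow> real" where
  "cstar d J = Inf (Phi d J ` {0<..})"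

definition H1 :: "real^'n \<Rightarrow> (real^'n \<Rightarrow> real^'n) \<Rightarrow> (real^'n \<Rightarrow> real^'n) \<Rightarrow> (real^'n \<Rightarrow> real^'n)
    \<Rightarrow> real^'n \<Rightarrow> real^'n \<Rightarrow> real^'n \<Rightarrow> real^'n^'n \<Rightarrow> bool" where
  "H1 d f fm fp k km kp J \<longleftrightarrow>
     vpos kp \<and>
     continuous_on {0..kp} f \<and> piecewise_C2_on {0..kp} f \<and>
     global_existence d f kp \<and>
     vpos km \<and> km \<le> k \<and> k \<le> kp \<and>
     continuous_on {0..km} fm \<and> piecewise_C2_on {0..km} fm \<and>
     continuous_on {0..kp} fp \<and> piecewise_C2_on {0..kp} fp \<and>
     (\<forall>u\<in>{0..km}. fm u \<le> f u) \<and> (\<forall>u\<in>{0..kp}. f u \<le> fp u) \<and>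
     f 0 = 0 \<and> f k = 0 \<and> fm 0 = 0 \<and> fm km = 0 \<and> fp 0 = 0 \<and> fp kp = 0 \<and>
     (\<forall>u\<in>{0..k}. vpos u \<and> f u = 0 \<longrightarrow> u = k) \<and>
     (\<forall>u\<in>{0..km}. vpos u \<and> fm u = 0 \<longrightarrow> u = km) \<and>
     (\<forall>u\<in>{0..kp}. vpos u \<and> fp u = 0 \<longrightarrow> u = kp) \<and>
     cooperative_on {0..km} fm \<and> cooperative_on {0..kp} fp \<and>
     (f has_derivative (\<lambda>h. J *v h)) (at 0 within {0..kp}) \<and>
     (fm has_derivative (\<lambda>h. J *v h)) (at 0 within {0..km}) \<and>
     (fp has_derivative (\<lambda>h. J *v h)) (at 0 within {0..kp})"

text \<open>(H2): blocks are given by a monotone block-index map b onto {..<m} (block r = b^-1 {r}),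
  following the linear order of the index type.\<close>
definition H2 :: "real^('n::{finite,linorder}) \<Rightarrow> real^('n::{finite,linorder})^('n::{finite,linorder})
    \<Rightarrow> ('n::{finite,linorder} \<Rightarrow> nat) \<Rightarrow> nat
    \<Rightarrow> (real \<Rightarrow> real^('n::{finite,linorder})) \<Rightarrow> bool" where
  "H2 d J b m \<nu> \<longleftrightarrow>
     mono b \<and> b ` UNIV = {..<m} \<and>
     (\<forall>lam>0.
        (\<forall>i j. b i < b j \<longrightarrow> A_lam d J lam $ i $ j = 0) \<and>
        (\<forall>r<m. irreducible_block {i. b i = r} (A_lam d J lam) \<or>
               (card {i. b i = r} = 1 \<and> (\<forall>i. b i = r \<longrightarrow> A_lam d J lam $ i $ i = 0))) \<and>
        Psi_block {i. b i = 0} (A_lam d J lam) = Psi (A_lam d J lam) \<and>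
        Psi (A_lam d J lam) > 0 \<and>
        (\<forall>r. 0 < r \<and> r < m \<longrightarrow> Psi_block {i. b i = r} (A_lam d J lam) < Psi (A_lam d J lam)) \<and>
        vpos (\<nu> lam) \<and> A_lam d J lam *v \<nu> lam = Psi (A_lam d J lam) *\<^sub>R \<nu> lam) \<and>
     continuous_on {0<..} \<nu>"

definition H3 :: "(real^'n \<Rightarrow> real^'n) \<Rightarrow> (real^'n \<Rightarrow> real^'n) \<Rightarrow> real^'n \<Rightarrow> real^'n
    \<Rightarrow> real^'n^'n \<Rightarrow> (real \<Rightarrow> real^'n) \<Rightarrow> bool" where
  "H3 fm fp km kp J \<nu> \<longleftrightarrow>
     (\<forall>\<alpha>>0. \<forall>lam>0.
        (\<alpha> *\<^sub>R \<nu> lam \<in> {0..km} \<longrightarrow> fm (\<alpha> *\<^sub>R \<nu> lam) \<le> \<alpha> *\<^sub>R (J *v \<nu> lam)) \<and>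
        (\<alpha> *\<^sub>R \<nu> lam \<in> {0..kp} \<longrightarrow> fp (\<alpha> *\<^sub>R \<nu> lam) \<le> \<alpha> *\<^sub>R (J *v \<nu> lam)))"

definition lam1 :: "real^'n \<Rightarrow> real \<Rightarrow> real \<Rightarrow> 'n \<Rightarrow> real" where
  "lam1 d c \<beta> i = (- c + sqrt (c\<^sup>2 + 4 * \<beta> * d $ i)) / (2 * d $ i)"

definition lam2 :: "real^'n \<Rightarrow> real \<Rightarrow> real \<Rightarrow> 'n \<Rightarrow> real" where
  "lam2 d c \<beta> i = (c + sqrt (c\<^sup>2 + 4 * \<beta> * d $ i)) / (2 * d $ i)"

definition Hfun :: "(real^'n \<Rightarrow> real^'n) \<Rightarrow> real \<Rightarrow> real^'n \<Rightarrow> 'n \<Rightarrow> real" where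
  "Hfun f \<beta> u i = \<beta> * u $ i + f u $ i"

definition Top :: "real^'n \<Rightarrow> (real^'n \<Rightarrow> real^'n) \<Rightarrow> real \<Rightarrow> real
    \<Rightarrow> (real \<Rightarrow> real^'n) \<Rightarrow> real \<Rightarrow> real^'n" where
  "Top d f c \<beta> u \<xi> = (\<chi> i. 1 / (d $ i * (lam1 d c \<beta> i + lam2 d c \<beta> i)) *
      ((LBINT s:{..\<xi>}. exp (- lam1 d c \<beta> i * (\<xi> - s)) * Hfun f \<beta> (u s) i) +
       (LBINT s:{\<xi>..}. exp (lam2 d c \<beta> i * (\<xi> - s)) * Hfun f \<beta> (u s) i)))"

definition phi_plus :: "real^'n \<Rightarrow> (real \<Rightarrow> real^'n) \<Rightarrow> real \<Rightarrow> real \<Rightarrow> real^'n" where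
  "phi_plus k \<nu> L \<xi> = (\<chi> i. min (k $ i) (\<nu> L $ i * exp (L * \<xi>)))"

definition phi_minus :: "(real \<Rightarrow> real^'n) \<Rightarrow> real \<Rightarrow> real \<Rightarrow> real \<Rightarrow> real \<Rightarrow> real^'n" where
  "phi_minus \<nu> L \<gamma> q \<xi> =
     (\<chi> i. max 0 (\<nu> L $ i * exp (L * \<xi>) - q * \<nu> (\<gamma> * L) $ i * exp (\<gamma> * L * \<xi>)))"

definition in_E :: "real \<Rightarrow> (real \<Rightarrow> real^'n) \<Rightarrow> bool" where
  "in_E \<rho> u \<longleftrightarrow> continuous_on UNIV u \<and>
     (\<forall>i. bdd_above (range (\<lambda>\<xi>. \<bar>u \<xi> $ i\<bar> * exp (- \<rho> * \<xi>))))"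

definition wnorm :: "real \<Rightarrow> (real \<Rightarrow> real^'n) \<Rightarrow> real" where
  "wnorm \<rho> u = (\<Sum>i\<in>UNIV. SUP \<xi>. \<bar>u \<xi> $ i\<bar> * exp (- \<rho> * \<xi>))"

definition A_set :: "real \<Rightarrow> (real \<Rightarrow> real^'n) \<Rightarrow> (real \<Rightarrow> real^'n) \<Rightarrow> (real \<Rightarrow> real^'n) set" where
  "A_set \<rho> pm pp = {u. in_E \<rho> u \<and> (\<forall>\<xi>. pm \<xi> \<le> u \<xi> \<and> u \<xi> \<le> pp \<xi>)}"

end

theory Submission
  imports Defs
begin

text \<open>Componentwise, T_i[u] is the convolution of H_i(u(.)) with the integrable kernel
  exp(-lam1 t) for t > 0 and exp(lam2 t) for t < 0. For u in A we have
  0 <= u(s) <= min(k, nu exp(Lc s)) and f(u) = O(|u|) on [0, k+], hence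
  |H_i(u(s))| <= min(M0, M1 exp(Lc s)); as rho < Lc < lam2, this puts T u into E_rho.
  For continuity, the weighted difference |T v - T u| exp(-rho xi) is small for xi << 0 because
  both images are O(exp(Lc xi)) and Lc > rho. Elsewhere, on (-inf, R] the weighted norm of v - u
  controls |v - u| uniformly, so uniform continuity of H on the box [0, k+] makes H(v) - H(u)
  small there, and the part beyond R only costs exp(-rho R).

  Besides the bounds defining A, only continuity of f, f(0) = 0, differentiability of f at 0,
  lam1 > 0 and lam2 > Lc are used.\<close>

section \<open>Exponential convolution kernels\<close>

lemma set_integral_exp_atLeast:
  fixes \<mu> a :: real
  assumes "0 < \<mu>"
  shows "set_integrable lborel {a..} (\<lambda>s. exp (- \<mu> * s))"
    and "(LBINT s:{a..}. exp (- \<mu> * s)) = exp (- \<mu> * a) / \<mu>"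
proof -
  have hk: "((\<lambda>s. exp (- \<mu> * s)) has_integral exp (- \<mu> * a) / \<mu>) {a..}"
    using has_integral_exp_minus_to_infinity[OF assms] .
  then have "(\<lambda>s. exp (- \<mu> * s)) absolutely_integrable_on {a..}"
    by (intro nonnegative_absolutely_integrable_1) (auto simp: integrable_on_def)
  then have "integrable lebesgue (\<lambda>s. indicator {a..} s *\<^sub>R exp (- \<mu> * s))"
    by (simp add: set_integrable_def)
  moreover have "(\<lambda>s. indicator {a..} s *\<^sub>R exp (- \<mu> * s)) \<in> borel_measurable lborel"
    by measurable
  ultimately show int: "set_integrable lborel {a..} (\<lambda>s. exp (- \<mu> * s))"
    unfolding set_integrable_def using integrable_completion by blast
  show "(LBINT s:{a..}. exp (- \<mu> * s)) = exp (- \<mu> * a) / \<mu>"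
    using set_borel_integral_eq_integral(2)[OF int] hk integral_unique by metis
qed

lemma set_integral_exp_atMost:
  fixes \<mu> a :: real
  assumes "0 < \<mu>"
  shows "set_integrable lborel {..a} (\<lambda>s. exp (\<mu> * s))"
    and "(LBINT s:{..a}. exp (\<mu> * s)) = exp (\<mu> * a) / \<mu>"
proof -
  define g where "g s = indicator {-a..} s *\<^sub>R exp (- \<mu> * s)" for s :: real
  have g: "integrable lborel g" "integral\<^sup>L lborel g = exp (\<mu> * a) / \<mu>"
    using set_integral_exp_atLeast[OF assms, of "-a"]
    by (simp_all add: set_integrable_def set_lebesgue_integral_def g_def[abs_def])
  have reflect: "(\<lambda>s. g (0 + (-1) * s)) = (\<lambda>s. indicator {..a} s *\<^sub>R exp (\<mu> * s))"
    by (auto simp: g_def indicator_def fun_eq_iff)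
  show "set_integrable lborel {..a} (\<lambda>s. exp (\<mu> * s))"
    using lborel_integrable_real_affine[OF g(1), of "-1" 0] unfolding set_integrable_def reflect
    by simp
  have "integral\<^sup>L lborel g = \<bar>-1\<bar> *\<^sub>R integral\<^sup>L lborel (\<lambda>s. g (0 + (-1) * s))"
    by (rule lborel_integral_real_affine) simp
  then show "(LBINT s:{..a}. exp (\<mu> * s)) = exp (\<mu> * a) / \<mu>"
    using g(2) unfolding set_lebesgue_integral_def reflect by simp
qed

lemma set_integral_dominated:
  fixes g h :: "'a \<Rightarrow> real"
  assumes g: "set_integrable M S g" and h: "set_borel_measurable M S h"
    and le: "\<And>s. s \<in> S \<Longrightarrow> \<bar>h s\<bar> \<le> g s"
  shows "set_integrable M S h" and "\<bar>LINT s:S|M. h s\<bar> \<le> (LINT s:S|M. g s)"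
proof -
  show int: "set_integrable M S h"
    by (rule set_integrable_bound[OF g h]) (auto intro!: AE_I2 order_trans[OF le abs_ge_self])
  have "\<bar>LINT s:S|M. h s\<bar> \<le> (LINT s:S|M. \<bar>h s\<bar>)"
    using set_integral_norm_bound[OF int] by simp
  also have "\<dots> \<le> (LINT s:S|M. g s)"
    using set_integral_mono[OF set_integrable_abs[OF int] g] le by blast
  finally show "\<bar>LINT s:S|M. h s\<bar> \<le> (LINT s:S|M. g s)" .
qed

lemma isCont_lebesgue_integral_param:
  fixes G :: "real \<Rightarrow> real \<Rightarrow> real" and w :: "real \<Rightarrow> real"
  assumes meas: "\<And>\<xi>. G \<xi> \<in> borel_measurable lborel"
    and w: "integrable lborel w"
    and dominated: "\<And>\<xi> s. \<bar>\<xi> - \<xi>0\<bar> \<le> 1 \<Longrightarrow> \<bar>G \<xi> s\<bar> \<le> w s"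
    and cont: "\<And>s. s \<noteq> \<xi>0 \<Longrightarrow> isCont (\<lambda>\<xi>. G \<xi> s) \<xi>0"
  shows "isCont (\<lambda>\<xi>. integral\<^sup>L lborel (G \<xi>)) \<xi>0"
proof (rule continuous_at_sequentiallyI)
  fix X :: "nat \<Rightarrow> real" assume X: "X \<longlonglongrightarrow> \<xi>0"
  define Y where "Y n = (if \<bar>X n - \<xi>0\<bar> \<le> 1 then X n else \<xi>0)" for n
  have XY: "eventually (\<lambda>n. X n = Y n) sequentially"
  proof -
    have "eventually (\<lambda>n. dist (X n) \<xi>0 < 1) sequentially" using X by (rule tendstoD) simp
    then show ?thesis by eventually_elim (auto simp: Y_def dist_real_def)
  qed
  have Y: "Y \<longlonglongrightarrow> \<xi>0" using X XY by (rule Lim_transform_eventually)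
  have "(\<lambda>n. integral\<^sup>L lborel (G (Y n))) \<longlonglongrightarrow> integral\<^sup>L lborel (G \<xi>0)"
  proof (rule integral_dominated_convergence[where w=w])
    show "AE s in lborel. (\<lambda>n. G (Y n) s) \<longlonglongrightarrow> G \<xi>0 s"
      using AE_lborel_singleton[of \<xi>0] by eventually_elim (rule isCont_tendsto_compose[OF cont Y])
    show "\<And>n. AE s in lborel. norm (G (Y n) s) \<le> w s"
      by (auto simp: Y_def intro!: dominated)
  qed (use meas w in auto)
  moreover have "eventually (\<lambda>n. integral\<^sup>L lborel (G (Y n)) = integral\<^sup>L lborel (G (X n))) sequentially"
    using XY by eventually_elim simp
  ultimately show "(\<lambda>n. integral\<^sup>L lborel (G (X n))) \<longlonglongrightarrow> integral\<^sup>L lborel (G \<xi>0)"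
    by (rule Lim_transform_eventually)
qed

definition kernel_integral :: "real \<Rightarrow> real \<Rightarrow> (real \<Rightarrow> real) \<Rightarrow> real \<Rightarrow> real" where
  "kernel_integral l1 l2 h \<xi> =
     (LBINT s:{..\<xi>}. exp (- l1 * (\<xi> - s)) * h s) + (LBINT s:{\<xi>..}. exp (l2 * (\<xi> - s)) * h s)"

context
  fixes h :: "real \<Rightarrow> real" and l1 l2 \<mu> a b :: real
  assumes h_meas: "h \<in> borel_measurable lborel"
    and l1_pos: "0 < l1" and \<mu>: "0 \<le> \<mu>" "\<mu> < l2" and ab: "0 \<le> a" "0 \<le> b"
    and h_bound: "\<And>s. \<bar>h s\<bar> \<le> a + b * exp (\<mu> * s)"
begin

lemma left_majorant_integral:
  "set_integrable lborel {..\<xi>} (\<lambda>s. exp (- l1 * (\<xi> - s)) * (a + b * exp (\<mu> * s)))"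
  "(LBINT s:{..\<xi>}. exp (- l1 * (\<xi> - s)) * (a + b * exp (\<mu> * s))) =
    a / l1 + b * exp (\<mu> * \<xi>) / (l1 + \<mu>)"
proof -
  have split: "(\<lambda>s. exp (- l1 * (\<xi> - s)) * (a + b * exp (\<mu> * s))) =
      (\<lambda>s. a * exp (- l1 * \<xi>) * exp (l1 * s) + b * exp (- l1 * \<xi>) * exp ((l1 + \<mu>) * s))"
    by (auto simp: fun_eq_iff algebra_simps simp flip: exp_add)
  have "l1 + \<mu> > 0" using l1_pos \<mu> by simp
  note E1 = set_integral_exp_atMost[OF l1_pos, of \<xi>]
    and E2 = set_integral_exp_atMost[OF this, of \<xi>]
  have I1: "set_integrable lborel {..\<xi>} (\<lambda>s. a * exp (- l1 * \<xi>) * exp (l1 * s))"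
    and I2: "set_integrable lborel {..\<xi>} (\<lambda>s. b * exp (- l1 * \<xi>) * exp ((l1 + \<mu>) * s))"
    using E1(1) E2(1) by simp_all
  show "set_integrable lborel {..\<xi>} (\<lambda>s. exp (- l1 * (\<xi> - s)) * (a + b * exp (\<mu> * s)))"
    unfolding split by (rule set_integral_add(1)[OF I1 I2])
  have "(LBINT s:{..\<xi>}. exp (- l1 * (\<xi> - s)) * (a + b * exp (\<mu> * s))) =
      a * exp (- l1 * \<xi>) * (exp (l1 * \<xi>) / l1)
        + b * exp (- l1 * \<xi>) * (exp ((l1 + \<mu>) * \<xi>) / (l1 + \<mu>))"
      (is "?I = _")
    unfolding split set_integral_add(2)[OF I1 I2] set_integral_mult_right E1(2) E2(2) ..
  also have "\<dots> = a / l1 + b * exp (\<mu> * \<xi>) / (l1 + \<mu>)"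
    by (simp add: algebra_simps flip: exp_add)
  finally show "?I = a / l1 + b * exp (\<mu> * \<xi>) / (l1 + \<mu>)" .
qed

lemma right_majorant_integral:
  "set_integrable lborel {\<xi>..} (\<lambda>s. exp (l2 * (\<xi> - s)) * (a + b * exp (\<mu> * s)))"
  "(LBINT s:{\<xi>..}. exp (l2 * (\<xi> - s)) * (a + b * exp (\<mu> * s))) =
    a / l2 + b * exp (\<mu> * \<xi>) / (l2 - \<mu>)"
proof -
  have split: "(\<lambda>s. exp (l2 * (\<xi> - s)) * (a + b * exp (\<mu> * s))) =
      (\<lambda>s. a * exp (l2 * \<xi>) * exp (- l2 * s) + b * exp (l2 * \<xi>) * exp (- (l2 - \<mu>) * s))"
    by (auto simp: fun_eq_iff algebra_simps simp flip: exp_add)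
  have "l2 > 0" "l2 - \<mu> > 0" using \<mu> by simp_all
  note E1 = set_integral_exp_atLeast[OF this(1), of \<xi>]
    and E2 = set_integral_exp_atLeast[OF this(2), of \<xi>]
  have I1: "set_integrable lborel {\<xi>..} (\<lambda>s. a * exp (l2 * \<xi>) * exp (- l2 * s))"
    and I2: "set_integrable lborel {\<xi>..} (\<lambda>s. b * exp (l2 * \<xi>) * exp (- (l2 - \<mu>) * s))"
    using E1(1) E2(1) by simp_all
  show "set_integrable lborel {\<xi>..} (\<lambda>s. exp (l2 * (\<xi> - s)) * (a + b * exp (\<mu> * s)))"
    unfolding split by (rule set_integral_add(1)[OF I1 I2])
  have "(LBINT s:{\<xi>..}. exp (l2 * (\<xi> - s)) * (a + b * exp (\<mu> * s))) =
      a * exp (l2 * \<xi>) * (exp (- l2 * \<xi>) / l2)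
        + b * exp (l2 * \<xi>) * (exp (- (l2 - \<mu>) * \<xi>) / (l2 - \<mu>))"
      (is "?I = _")
    unfolding split set_integral_add(2)[OF I1 I2] set_integral_mult_right E1(2) E2(2) ..
  also have "\<dots> = a / l2 + b * exp (\<mu> * \<xi>) / (l2 - \<mu>)"
    by (simp add: algebra_simps flip: exp_add)
  finally show "?I = a / l2 + b * exp (\<mu> * \<xi>) / (l2 - \<mu>)" .
qed

lemma left_kernel_estimate:
  "set_integrable lborel {..\<xi>} (\<lambda>s. exp (- l1 * (\<xi> - s)) * h s)"
  "\<bar>LBINT s:{..\<xi>}. exp (- l1 * (\<xi> - s)) * h s\<bar> \<le> a / l1 + b * exp (\<mu> * \<xi>) / (l1 + \<mu>)"
  using set_integral_dominated[where h="\<lambda>s. exp (- l1 * (\<xi> - s)) * h s", OF left_majorant_integral(1)]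
    h_meas h_bound left_majorant_integral(2)
  by (auto simp: set_borel_measurable_def abs_mult mult_left_mono)

lemma right_kernel_estimate:
  "set_integrable lborel {\<xi>..} (\<lambda>s. exp (l2 * (\<xi> - s)) * h s)"
  "\<bar>LBINT s:{\<xi>..}. exp (l2 * (\<xi> - s)) * h s\<bar> \<le> a / l2 + b * exp (\<mu> * \<xi>) / (l2 - \<mu>)"
  using set_integral_dominated[where h="\<lambda>s. exp (l2 * (\<xi> - s)) * h s", OF right_majorant_integral(1)]
    h_meas h_bound right_majorant_integral(2)
  by (auto simp: set_borel_measurable_def abs_mult mult_left_mono)

lemma kernel_integral_bound:
  "\<bar>kernel_integral l1 l2 h \<xi>\<bar> \<le> a * (1 / l1 + 1 / l2) + b * exp (\<mu> * \<xi>) * (1 / (l1 + \<mu>) + 1 / (l2 - \<mu>))"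
proof -
  have "\<bar>kernel_integral l1 l2 h \<xi>\<bar>
      \<le> (a / l1 + b * exp (\<mu> * \<xi>) / (l1 + \<mu>)) + (a / l2 + b * exp (\<mu> * \<xi>) / (l2 - \<mu>))"
    unfolding kernel_integral_def using left_kernel_estimate(2) right_kernel_estimate(2)
    by (rule abs_triangle_ineq[THEN order_trans, OF add_mono])
  then show ?thesis by (simp add: algebra_simps)
qed

lemma isCont_left_kernel: "isCont (\<lambda>\<xi>. LBINT s:{..\<xi>}. exp (- l1 * (\<xi> - s)) * h s) \<xi>0"
  unfolding set_lebesgue_integral_def
proof (rule isCont_lebesgue_integral_param)
  \<comment> \<open>for |xi - xi0| <= 1 the kernel at xi is at most exp(2 l1) times the kernel at xi0 + 1\<close>
  let ?w = "\<lambda>s. exp (2 * l1) *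
    (indicator {..\<xi>0 + 1} s *\<^sub>R (exp (- l1 * (\<xi>0 + 1 - s)) * (a + b * exp (\<mu> * s))))"
  show "integrable lborel ?w"
    using left_majorant_integral(1)[of "\<xi>0 + 1"] by (simp add: set_integrable_def)
  show "\<bar>indicator {..\<xi>} s *\<^sub>R (exp (- l1 * (\<xi> - s)) * h s)\<bar> \<le> ?w s" if "\<bar>\<xi> - \<xi>0\<bar> \<le> 1" for \<xi> s
  proof (cases "s \<le> \<xi>")
    case True
    have "exp (- l1 * (\<xi> - s)) \<le> exp (2 * l1) * exp (- l1 * (\<xi>0 + 1 - s))"
      unfolding exp_add[symmetric] exp_le_cancel_iff
      using mult_left_mono[of "\<xi>0 - 1" \<xi> l1] that l1_pos by (simp add: algebra_simps)
    then have "exp (- l1 * (\<xi> - s)) * \<bar>h s\<bar>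
        \<le> (exp (2 * l1) * exp (- l1 * (\<xi>0 + 1 - s))) * (a + b * exp (\<mu> * s))"
      by (rule mult_mono) (use h_bound in auto)
    then show ?thesis using True that by (simp add: abs_mult)
  qed (use ab in simp)
  have ind: "isCont (\<lambda>\<xi>. indicator {..\<xi>} s :: real) \<xi>0" if "s \<noteq> \<xi>0" for s
  proof -
    have "(\<lambda>\<xi>. indicator {..\<xi>} s :: real) = indicator {s..}"
      by (auto simp: indicator_def fun_eq_iff)
    then show ?thesis using that by (simp add: isCont_indicator)
  qed
  show "isCont (\<lambda>\<xi>. indicator {..\<xi>} s *\<^sub>R (exp (- l1 * (\<xi> - s)) * h s)) \<xi>0" if "s \<noteq> \<xi>0" for s
    by (intro continuous_intros ind that)
qed (use h_meas in measurable)

lemma isCont_right_kernel: "isCont (\<lambda>\<xi>. LBINT s:{\<xi>..}. exp (l2 * (\<xi> - s)) * h s) \<xi>0"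
  unfolding set_lebesgue_integral_def
proof (rule isCont_lebesgue_integral_param)
  let ?w = "\<lambda>s. exp (2 * l2) *
    (indicator {\<xi>0 - 1..} s *\<^sub>R (exp (l2 * (\<xi>0 - 1 - s)) * (a + b * exp (\<mu> * s))))"
  show "integrable lborel ?w"
    using right_majorant_integral(1)[of "\<xi>0 - 1"] by (simp add: set_integrable_def)
  show "\<bar>indicator {\<xi>..} s *\<^sub>R (exp (l2 * (\<xi> - s)) * h s)\<bar> \<le> ?w s" if "\<bar>\<xi> - \<xi>0\<bar> \<le> 1" for \<xi> s
  proof (cases "\<xi> \<le> s")
    case True
    have "exp (l2 * (\<xi> - s)) \<le> exp (2 * l2) * exp (l2 * (\<xi>0 - 1 - s))"
      unfolding exp_add[symmetric] exp_le_cancel_iff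
      using mult_left_mono[of \<xi> "\<xi>0 + 1" l2] that \<mu> by (simp add: algebra_simps)
    then have "exp (l2 * (\<xi> - s)) * \<bar>h s\<bar>
        \<le> (exp (2 * l2) * exp (l2 * (\<xi>0 - 1 - s))) * (a + b * exp (\<mu> * s))"
      by (rule mult_mono) (use h_bound in auto)
    then show ?thesis using True that by (simp add: abs_mult)
  qed (use ab in simp)
  have ind: "isCont (\<lambda>\<xi>. indicator {\<xi>..} s :: real) \<xi>0" if "s \<noteq> \<xi>0" for s
  proof -
    have "(\<lambda>\<xi>. indicator {\<xi>..} s :: real) = indicator {..s}"
      by (auto simp: indicator_def fun_eq_iff)
    then show ?thesis using that by (simp add: isCont_indicator)
  qed
  show "isCont (\<lambda>\<xi>. indicator {\<xi>..} s *\<^sub>R (exp (l2 * (\<xi> - s)) * h s)) \<xi>0" if "s \<noteq> \<xi>0" for s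
    by (intro continuous_intros ind that)
qed (use h_meas in measurable)

lemma continuous_kernel_integral: "continuous_on UNIV (kernel_integral l1 l2 h)"
  unfolding kernel_integral_def
  by (intro continuous_at_imp_continuous_on ballI isCont_add isCont_left_kernel isCont_right_kernel)

end

lemma kernel_integral_diff:
  fixes g h :: "real \<Rightarrow> real"
  assumes meas: "g \<in> borel_measurable lborel" "h \<in> borel_measurable lborel"
    and bounded: "\<And>s. \<bar>g s\<bar> \<le> M" "\<And>s. \<bar>h s\<bar> \<le> M" and l: "0 < l1" "0 < l2"
  shows "kernel_integral l1 l2 (\<lambda>s. g s - h s) \<xi> = kernel_integral l1 l2 g \<xi> - kernel_integral l1 l2 h \<xi>"
proof -
  have M: "0 \<le> M" using bounded(1)[of 0] by linarith
  have bound: "\<bar>g s\<bar> \<le> M + 0 * exp (0 * s)" "\<bar>h s\<bar> \<le> M + 0 * exp (0 * s)" for s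
    using bounded by simp_all
  note L = left_kernel_estimate(1)[OF _ l(1) order_refl l(2) M order_refl]
    and R = right_kernel_estimate(1)[OF _ l(1) order_refl l(2) M order_refl]
  show ?thesis
    unfolding kernel_integral_def right_diff_distrib[of "exp _"]
      set_integral_diff(2)[OF L[OF meas(1) bound(1)] L[OF meas(2) bound(2)]]
      set_integral_diff(2)[OF R[OF meas(1) bound(1)] R[OF meas(2) bound(2)]]
    by simp
qed

lemma exp_neg_mult_le:
  fixes K \<alpha> \<epsilon> :: real
  assumes "0 < \<alpha>" "0 < \<epsilon>"
  obtains R where "K * exp (- \<alpha> * R) \<le> \<epsilon>"
proof (cases "K \<le> 0")
  case True
  then show ?thesis using assms by (intro that[of 0]) simp
next
  case False
  define R where "R = ln (K / \<epsilon>) / \<alpha>"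
  have "exp (- \<alpha> * R) = \<epsilon> / K" using False assms by (simp add: R_def exp_minus)
  then show ?thesis using False by (intro that[of R]) simp
qed

lemma kernel_integral_weighted_decay:
  assumes meas: "D \<in> borel_measurable lborel" and l: "0 < l1" "0 \<le> L" "L < l2" and "0 \<le> M1"
    and decay: "\<And>s. \<bar>D s\<bar> \<le> M1 * exp (L * s)"
  shows "\<bar>kernel_integral l1 l2 D \<xi>\<bar> * exp (- \<rho> * \<xi>)
    \<le> M1 * (1 / (l1 + L) + 1 / (l2 - L)) * exp ((L - \<rho>) * \<xi>)"
proof -
  have "\<bar>kernel_integral l1 l2 D \<xi>\<bar> \<le> M1 * exp (L * \<xi>) * (1 / (l1 + L) + 1 / (l2 - L))"
    using kernel_integral_bound[OF meas l order_refl \<open>0 \<le> M1\<close>] decay by simp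
  then show ?thesis
    by (rule order_trans[OF mult_right_mono]) (simp_all add: algebra_simps flip: exp_add)
qed

lemma kernel_integral_weighted_local:
  assumes meas: "D \<in> borel_measurable lborel" and l: "0 < l1" "0 \<le> \<rho>" "\<rho> < l2" and "0 \<le> \<eta>" "0 \<le> M0"
    and bounded: "\<And>s. \<bar>D s\<bar> \<le> M0" and small: "\<And>s. s \<le> R \<Longrightarrow> \<bar>D s\<bar> \<le> \<eta>"
  shows "\<bar>kernel_integral l1 l2 D \<xi>\<bar> * exp (- \<rho> * \<xi>)
    \<le> \<eta> * (1 / l1 + 1 / l2) * exp (- \<rho> * \<xi>) + M0 * (1 / (l1 + \<rho>) + 1 / (l2 - \<rho>)) * exp (- \<rho> * R)"
proof -
  have "\<bar>D s\<bar> \<le> \<eta> + M0 * exp (- \<rho> * R) * exp (\<rho> * s)" for s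
  proof (cases "s \<le> R")
    case True
    then show ?thesis using small \<open>0 \<le> M0\<close> by (simp add: add_increasing2)
  next
    case False
    then have "1 \<le> exp (- \<rho> * R) * exp (\<rho> * s)"
      using l mult_left_mono[of R s \<rho>] by (simp add: algebra_simps flip: exp_add)
    then have "M0 \<le> M0 * (exp (- \<rho> * R) * exp (\<rho> * s))" using \<open>0 \<le> M0\<close> mult_left_mono by fastforce
    then show ?thesis using bounded[of s] \<open>0 \<le> \<eta>\<close> by (simp add: mult.assoc)
  qed
  then have "\<bar>kernel_integral l1 l2 D \<xi>\<bar>
      \<le> \<eta> * (1 / l1 + 1 / l2) + M0 * exp (- \<rho> * R) * exp (\<rho> * \<xi>) * (1 / (l1 + \<rho>) + 1 / (l2 - \<rho>))"
    using kernel_integral_bound[OF meas l \<open>0 \<le> \<eta>\<close>, of "M0 * exp (- \<rho> * R)"] \<open>0 \<le> M0\<close> by simp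
  then show ?thesis
    by (rule order_trans[OF mult_right_mono]) (simp_all add: algebra_simps flip: exp_add)
qed

text \<open>Far to the left the decay rate L > rho of D beats the weight; elsewhere D is eta-small
  up to R, and beyond R the bound M0 is damped by exp(-rho R).\<close>

lemma kernel_integral_weighted_small:
  assumes l1: "0 < l1" and \<rho>: "0 < \<rho>" "\<rho> < L" "L < l2" and M: "0 \<le> M0" "0 \<le> M1" and \<epsilon>: "0 < \<epsilon>"
  obtains \<eta> R where "0 < \<eta>"
    "\<And>D \<xi>. D \<in> borel_measurable lborel \<Longrightarrow> \<forall>s. \<bar>D s\<bar> \<le> M0 \<Longrightarrow> \<forall>s. \<bar>D s\<bar> \<le> M1 * exp (L * s) \<Longrightarrow>
       \<forall>s\<le>R. \<bar>D s\<bar> \<le> \<eta> \<Longrightarrow> \<bar>kernel_integral l1 l2 D \<xi>\<bar> * exp (- \<rho> * \<xi>) \<le> \<epsilon>"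
proof -
  have \<rho>_l2: "\<rho> < l2" using \<rho> by linarith
  define B where "B \<mu> = 1 / (l1 + \<mu>) + 1 / (l2 - \<mu>)" for \<mu>
  have B: "0 \<le> B 0" using l1 \<rho> by (simp add: B_def)
  obtain R0 where R0: "M1 * B L * exp (- (L - \<rho>) * R0) \<le> \<epsilon>"
    using exp_neg_mult_le[of "L - \<rho>" \<epsilon>] \<rho> \<epsilon> by auto
  obtain R where R: "M0 * B \<rho> * exp (- \<rho> * R) \<le> \<epsilon> / 2"
    using exp_neg_mult_le[of \<rho> "\<epsilon> / 2"] \<rho> \<epsilon> by auto
  define X where "X = B 0 * exp (\<rho> * R0)"
  have X: "0 \<le> X" using B by (simp add: X_def)
  define \<eta> where "\<eta> = \<epsilon> / (2 * X + 2)"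
  have \<eta>: "0 < \<eta>" using \<epsilon> X by (simp add: \<eta>_def)
  have "\<eta> * (2 * X + 2) = \<epsilon>" using X by (simp add: \<eta>_def)
  moreover have "2 * (\<eta> * X) \<le> \<eta> * (2 * X + 2)" using \<eta> by (simp add: algebra_simps)
  ultimately have \<eta>_le: "\<eta> * B 0 * exp (\<rho> * R0) \<le> \<epsilon> / 2" by (simp add: X_def mult.assoc)
  show ?thesis
  proof (rule that[OF \<eta>])
    fix D \<xi>
    assume meas: "D \<in> borel_measurable lborel" and bounded: "\<forall>s. \<bar>D s\<bar> \<le> M0"
      and decay: "\<forall>s. \<bar>D s\<bar> \<le> M1 * exp (L * s)" and small: "\<forall>s\<le>R. \<bar>D s\<bar> \<le> \<eta>"
    show "\<bar>kernel_integral l1 l2 D \<xi>\<bar> * exp (- \<rho> * \<xi>) \<le> \<epsilon>"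
    proof (cases "\<xi> \<le> - R0")
      case True
      then have "M1 * B L * exp ((L - \<rho>) * \<xi>) \<le> M1 * B L * exp (- (L - \<rho>) * R0)"
        using M l1 \<rho> mult_left_mono[OF True, of "L - \<rho>"]
        by (intro mult_left_mono) (simp_all add: B_def algebra_simps)
      then show ?thesis
        using kernel_integral_weighted_decay[OF meas l1 _ \<rho>(3) M(2), of \<xi> \<rho>] decay \<rho> R0
        by (simp add: B_def)
    next
      case False
      have "\<eta> * B 0 * exp (- \<rho> * \<xi>) \<le> \<eta> * B 0 * exp (\<rho> * R0)"
        using False \<eta> B \<rho> mult_left_mono[of "- R0" \<xi> \<rho>] by (intro mult_left_mono) auto
      moreover have "\<bar>kernel_integral l1 l2 D \<xi>\<bar> * exp (- \<rho> * \<xi>)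
          \<le> \<eta> * B 0 * exp (- \<rho> * \<xi>) + M0 * B \<rho> * exp (- \<rho> * R)"
        using kernel_integral_weighted_local[OF meas l1 less_imp_le[OF \<rho>(1)] \<rho>_l2 less_imp_le[OF \<eta>] M(1),
            of R \<xi>] bounded small
        unfolding B_def by simp
      ultimately show ?thesis using R \<eta>_le by linarith
    qed
  qed
qed

section \<open>The weighted space\<close>

lemma in_E_diff:
  assumes "in_E \<rho> u" "in_E \<rho> v"
  shows "in_E \<rho> (\<lambda>\<xi>. v \<xi> - u \<xi>)"
  unfolding in_E_def
proof (intro conjI allI)
  show "continuous_on UNIV (\<lambda>\<xi>. v \<xi> - u \<xi>)"
    using assms by (intro continuous_intros) (auto simp: in_E_def)
  fix i
  obtain Bu Bv where "\<And>\<xi>. \<bar>u \<xi> $ i\<bar> * exp (- \<rho> * \<xi>) \<le> Bu" "\<And>\<xi>. \<bar>v \<xi> $ i\<bar> * exp (- \<rho> * \<xi>) \<le> Bv"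
    using assms unfolding in_E_def bdd_above_def by (meson rangeI)
  moreover have "\<bar>(v \<xi> - u \<xi>) $ i\<bar> * exp (- \<rho> * \<xi>)
      \<le> \<bar>v \<xi> $ i\<bar> * exp (- \<rho> * \<xi>) + \<bar>u \<xi> $ i\<bar> * exp (- \<rho> * \<xi>)" for \<xi>
    by (metis abs_triangle_ineq4 distrib_right exp_ge_zero mult_right_mono vector_minus_component)
  ultimately have "\<bar>(v \<xi> - u \<xi>) $ i\<bar> * exp (- \<rho> * \<xi>) \<le> Bv + Bu" for \<xi>
    by (smt (verit))
  then show "bdd_above (range (\<lambda>\<xi>. \<bar>(v \<xi> - u \<xi>) $ i\<bar> * exp (- \<rho> * \<xi>)))"
    by (auto simp: bdd_above_def)
qed

lemma norm_le_wnorm: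
  assumes "in_E \<rho> w"
  shows "norm (w s) \<le> wnorm \<rho> w * exp (\<rho> * s)"
proof -
  have "\<bar>w s $ i\<bar> = (\<bar>w s $ i\<bar> * exp (- \<rho> * s)) * exp (\<rho> * s)" for i
    by (simp add: mult.assoc flip: exp_add)
  also have "\<dots> i \<le> (SUP \<xi>. \<bar>w \<xi> $ i\<bar> * exp (- \<rho> * \<xi>)) * exp (\<rho> * s)" for i
    using assms by (intro mult_right_mono cSUP_upper) (auto simp: in_E_def)
  finally have "(\<Sum>i\<in>UNIV. \<bar>w s $ i\<bar>) \<le> wnorm \<rho> w * exp (\<rho> * s)"
    unfolding wnorm_def sum_distrib_right by (rule sum_mono)
  then show ?thesis using norm_le_l1_cart[of "w s"] by linarith
qed

lemma dist_lt_if_wnorm_lt: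
  assumes "in_E \<rho> u" "in_E \<rho> v" "wnorm \<rho> (\<lambda>\<xi>. v \<xi> - u \<xi>) < \<delta>" "0 < \<delta>" "0 \<le> \<rho>" "s \<le> R"
  shows "dist (v s) (u s) < \<delta> * exp (\<rho> * R)"
proof -
  have "dist (v s) (u s) \<le> wnorm \<rho> (\<lambda>\<xi>. v \<xi> - u \<xi>) * exp (\<rho> * s)"
    using norm_le_wnorm[OF in_E_diff[OF assms(1,2)]] by (simp add: dist_norm)
  also have "\<dots> < \<delta> * exp (\<rho> * s)" using assms(3) by (rule mult_strict_right_mono) simp
  also have "\<dots> \<le> \<delta> * exp (\<rho> * R)"
    using assms(4) mult_left_mono[OF assms(6,5)] by simp
  finally show ?thesis .
qed

lemma wnorm_le:
  fixes w :: "real \<Rightarrow> real^'n"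
    and e :: real
  assumes "\<And>i \<xi>. \<bar>w \<xi> $ i\<bar> * exp (- \<rho> * \<xi>) \<le> e"
  shows "wnorm \<rho> w \<le> CARD('n) * e"
proof -
  have "wnorm \<rho> w \<le> (\<Sum>i\<in>(UNIV :: 'n set). e)"
    unfolding wnorm_def by (intro sum_mono cSUP_least assms) auto
  then show ?thesis by simp
qed

lemma finite_ex_pos_uniform:
  fixes P :: "'i::finite \<Rightarrow> real \<Rightarrow> bool"
  assumes ex: "\<And>i. \<exists>\<delta>>0. P i \<delta>" and smaller: "\<And>i \<delta> \<delta>'. P i \<delta> \<Longrightarrow> 0 < \<delta>' \<Longrightarrow> \<delta>' \<le> \<delta> \<Longrightarrow> P i \<delta>'"
  shows "\<exists>\<delta>>0. \<forall>i. P i \<delta>"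
proof -
  obtain \<delta> where \<delta>: "\<And>i. 0 < \<delta> i" "\<And>i. P i (\<delta> i)" using ex by metis
  have "0 < Min (range \<delta>)" using \<delta>(1) by simp
  moreover have "Min (range \<delta>) \<le> \<delta> i" for i by simp
  ultimately show ?thesis using \<delta>(2) smaller by blast
qed

section \<open>Kernel operators on the weighted space\<close>

definition kernel_operator :: "('n \<Rightarrow> real) \<Rightarrow> ('n \<Rightarrow> real) \<Rightarrow> ('n \<Rightarrow> real)
    \<Rightarrow> (real^'n \<Rightarrow> 'n \<Rightarrow> real) \<Rightarrow> (real \<Rightarrow> real^'n) \<Rightarrow> real \<Rightarrow> real^'n" where
  "kernel_operator \<kappa> l1 l2 H u \<xi> = (\<chi> i. \<kappa> i * kernel_integral (l1 i) (l2 i) (\<lambda>s. H (u s) i) \<xi>)"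

locale kernel_operator_setting =
  fixes S :: "(real^'n) set" and H :: "real^'n \<Rightarrow> 'n \<Rightarrow> real" and A :: "(real \<Rightarrow> real^'n) set"
    and l1 l2 :: "'n \<Rightarrow> real" and \<rho> L M0 M1 :: real
  assumes compact_S: "compact S" and continuous_H: "\<And>i. continuous_on S (\<lambda>w. H w i)"
    and A_in_E: "\<And>u. u \<in> A \<Longrightarrow> in_E \<rho> u" and A_into_S: "\<And>u s. u \<in> A \<Longrightarrow> u s \<in> S"
    and H_bounded: "\<And>u s i. u \<in> A \<Longrightarrow> \<bar>H (u s) i\<bar> \<le> M0"
    and H_decay: "\<And>u s i. u \<in> A \<Longrightarrow> \<bar>H (u s) i\<bar> \<le> M1 * exp (L * s)"
    and M_nonneg: "0 \<le> M0" "0 \<le> M1"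
    and l1_pos: "\<And>i. 0 < l1 i" and l2_gt: "\<And>i. L < l2 i" and \<rho>: "0 < \<rho>" "\<rho> < L"
begin

lemma continuous_H_comp: "u \<in> A \<Longrightarrow> continuous_on UNIV (\<lambda>s. H (u s) i)"
  by (rule continuous_on_compose2[OF continuous_H]) (use A_in_E A_into_S in \<open>auto simp: in_E_def\<close>)

lemma measurable_H_comp: "u \<in> A \<Longrightarrow> (\<lambda>s. H (u s) i) \<in> borel_measurable lborel"
  using borel_measurable_continuous_onI[OF continuous_H_comp] by simp

lemma H_comp_weighted_bound:
  assumes "u \<in> A"
  shows "\<bar>H (u s) i\<bar> \<le> 0 + max M0 M1 * exp (\<rho> * s)"
proof (cases "0 \<le> s")
  case True
  then have "M0 \<le> max M0 M1 * exp (\<rho> * s)"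
    using \<rho> M_nonneg mult_left_mono[of 1 "exp (\<rho> * s)" "max M0 M1"] by simp
  then show ?thesis using H_bounded[OF assms, of s i] by linarith
next
  case False
  then have "M1 * exp (L * s) \<le> max M0 M1 * exp (\<rho> * s)"
    using \<rho> M_nonneg mult_right_mono_neg[of \<rho> L s] by (intro mult_mono) auto
  then show ?thesis using H_decay[OF assms, of s i] by linarith
qed

lemma kernel_operator_in_E:
  assumes u: "u \<in> A"
  shows "in_E \<rho> (kernel_operator \<kappa> l1 l2 H u)"
  unfolding in_E_def
proof (intro conjI allI)
  have \<rho>_l2: "\<rho> < l2 i" for i using l2_gt[of i] \<rho> by linarith
  show "continuous_on UNIV (kernel_operator \<kappa> l1 l2 H u)"
    unfolding kernel_operator_def[abs_def]
    by (intro continuous_on_vec_lambda continuous_intros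
        continuous_kernel_integral[OF measurable_H_comp[OF u] l1_pos less_imp_le[OF \<rho>(1)] \<rho>_l2
          order_refl max.coboundedI1[OF M_nonneg(1)] H_comp_weighted_bound[OF u]])
  fix i
  note bound = kernel_integral_bound[OF measurable_H_comp[OF u] l1_pos[of i] less_imp_le[OF \<rho>(1)]
      \<rho>_l2[of i]      order_refl max.coboundedI1[OF M_nonneg(1)] H_comp_weighted_bound[OF u, of _ i]]
  define B where "B = \<bar>\<kappa> i\<bar> * max M0 M1 * (1 / (l1 i + \<rho>) + 1 / (l2 i - \<rho>))"
  have "\<bar>kernel_operator \<kappa> l1 l2 H u \<xi> $ i\<bar> * exp (- \<rho> * \<xi>) \<le> B" for \<xi>
  proof -
    have "\<bar>kernel_operator \<kappa> l1 l2 H u \<xi> $ i\<bar> * exp (- \<rho> * \<xi>) =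
        \<bar>\<kappa> i\<bar> * (\<bar>kernel_integral (l1 i) (l2 i) (\<lambda>s. H (u s) i) \<xi>\<bar> * exp (- \<rho> * \<xi>))"
      by (simp add: kernel_operator_def abs_mult)
    also have "\<dots> \<le> \<bar>\<kappa> i\<bar> * (max M0 M1 * exp (\<rho> * \<xi>) * (1 / (l1 i + \<rho>) + 1 / (l2 i - \<rho>)) * exp (- \<rho> * \<xi>))"
      using bound[of \<xi>] by (intro mult_left_mono mult_right_mono) auto
    also have "\<dots> = B" by (simp add: B_def algebra_simps flip: exp_add)
    finally show ?thesis .
  qed
  then show "bdd_above (range (\<lambda>\<xi>. \<bar>kernel_operator \<kappa> l1 l2 H u \<xi> $ i\<bar> * exp (- \<rho> * \<xi>)))"
    by (auto simp: bdd_above_def)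
qed


lemma kernel_operator_diff:
  assumes "v \<in> A" "u \<in> A"
  shows "kernel_operator \<kappa> l1 l2 H v \<xi> $ i - kernel_operator \<kappa> l1 l2 H u \<xi> $ i =
    \<kappa> i * kernel_integral (l1 i) (l2 i) (\<lambda>s. H (v s) i - H (u s) i) \<xi>"
  using kernel_integral_diff[OF measurable_H_comp[OF assms(1)] measurable_H_comp[OF assms(2)]
      H_bounded[OF assms(1)] H_bounded[OF assms(2)] l1_pos, of "l2 i"] l2_gt[of i] \<rho>
  by (simp add: kernel_operator_def right_diff_distrib)

lemma kernel_operator_component_continuous:
  assumes u: "u \<in> A" and \<epsilon>: "0 < \<epsilon>"
  shows "\<exists>\<delta>>0. \<forall>v\<in>A. wnorm \<rho> (\<lambda>\<xi>. v \<xi> - u \<xi>) < \<delta> \<longrightarrow>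
           (\<forall>\<xi>. \<bar>kernel_operator \<kappa> l1 l2 H v \<xi> $ i - kernel_operator \<kappa> l1 l2 H u \<xi> $ i\<bar>
                  * exp (- \<rho> * \<xi>) \<le> \<epsilon>)"
proof -
  have "0 < \<epsilon> / (\<bar>\<kappa> i\<bar> + 1)" using \<epsilon> by simp
  then obtain \<eta> R where \<eta>: "0 < \<eta>" and small: "\<And>D \<xi>. D \<in> borel_measurable lborel \<Longrightarrow>
      \<forall>s. \<bar>D s\<bar> \<le> 2 * M0 \<Longrightarrow> \<forall>s. \<bar>D s\<bar> \<le> 2 * M1 * exp (L * s) \<Longrightarrow> \<forall>s\<le>R. \<bar>D s\<bar> \<le> \<eta> \<Longrightarrow>
      \<bar>kernel_integral (l1 i) (l2 i) D \<xi>\<bar> * exp (- \<rho> * \<xi>) \<le> \<epsilon> / (\<bar>\<kappa> i\<bar> + 1)"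
    using kernel_integral_weighted_small[OF l1_pos \<rho> l2_gt] M_nonneg
    by (metis mult_nonneg_nonneg zero_le_numeral)
  obtain du where du: "0 < du" "\<And>x x'. x \<in> S \<Longrightarrow> x' \<in> S \<Longrightarrow> dist x' x < du \<Longrightarrow> \<bar>H x' i - H x i\<bar> < \<eta>"
    using compact_uniformly_continuous[OF continuous_H compact_S] \<eta>
    unfolding uniformly_continuous_on_def dist_real_def by metis
  show ?thesis
  proof (intro exI[of _ "du / exp (\<rho> * R)"] conjI ballI impI allI)
    show "0 < du / exp (\<rho> * R)" using du by simp
    fix v \<xi> assume v: "v \<in> A" and close: "wnorm \<rho> (\<lambda>\<xi>. v \<xi> - u \<xi>) < du / exp (\<rho> * R)"
    let ?D = "\<lambda>s. H (v s) i - H (u s) i"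
    have "\<bar>?D s\<bar> \<le> \<eta>" if "s \<le> R" for s
      using dist_lt_if_wnorm_lt[OF A_in_E[OF u] A_in_E[OF v] close _ _ that] du \<rho>
        du(2)[OF A_into_S[OF u] A_into_S[OF v]]
      by (simp add: less_imp_le)
    moreover have "\<bar>?D s\<bar> \<le> 2 * M0" "\<bar>?D s\<bar> \<le> 2 * M1 * exp (L * s)" for s
      using H_bounded[OF u, of s i] H_bounded[OF v, of s i] H_decay[OF u, of s i] H_decay[OF v, of s i]
      by linarith+
    moreover have "?D \<in> borel_measurable lborel"
      using measurable_H_comp[OF u] measurable_H_comp[OF v] by measurable
    ultimately have small_D: "\<bar>kernel_integral (l1 i) (l2 i) ?D \<xi>\<bar> * exp (- \<rho> * \<xi>) \<le> \<epsilon> / (\<bar>\<kappa> i\<bar> + 1)"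
      using small by blast
    have "\<bar>kernel_operator \<kappa> l1 l2 H v \<xi> $ i - kernel_operator \<kappa> l1 l2 H u \<xi> $ i\<bar> * exp (- \<rho> * \<xi>)
        = \<bar>\<kappa> i\<bar> * (\<bar>kernel_integral (l1 i) (l2 i) ?D \<xi>\<bar> * exp (- \<rho> * \<xi>))"
      unfolding kernel_operator_diff[OF v u] by (simp add: abs_mult)
    also have "\<dots> \<le> \<bar>\<kappa> i\<bar> * (\<epsilon> / (\<bar>\<kappa> i\<bar> + 1))"
      using small_D by (rule mult_left_mono) simp
    also have "\<dots> \<le> \<epsilon>" using \<epsilon> by (simp add: divide_le_eq)
    finally show "\<bar>kernel_operator \<kappa> l1 l2 H v \<xi> $ i - kernel_operator \<kappa> l1 l2 H u \<xi> $ i\<bar>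
        * exp (- \<rho> * \<xi>) \<le> \<epsilon>" .
  qed
qed

lemma kernel_operator_continuous:
  assumes u: "u \<in> A" and \<epsilon>: "0 < \<epsilon>"
  shows "\<exists>\<delta>>0. \<forall>v\<in>A. wnorm \<rho> (\<lambda>\<xi>. v \<xi> - u \<xi>) < \<delta> \<longrightarrow>
           wnorm \<rho> (\<lambda>\<xi>. kernel_operator \<kappa> l1 l2 H v \<xi> - kernel_operator \<kappa> l1 l2 H u \<xi>) < \<epsilon>"
proof -
  define \<epsilon>' where "\<epsilon>' = \<epsilon> / (2 * CARD('n))"
  have "0 < \<epsilon>'" using \<epsilon> by (simp add: \<epsilon>'_def)
  have "\<exists>\<delta>>0. \<forall>i. \<forall>v\<in>A. wnorm \<rho> (\<lambda>\<xi>. v \<xi> - u \<xi>) < \<delta> \<longrightarrow>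
      (\<forall>\<xi>. \<bar>kernel_operator \<kappa> l1 l2 H v \<xi> $ i - kernel_operator \<kappa> l1 l2 H u \<xi> $ i\<bar> * exp (- \<rho> * \<xi>) \<le> \<epsilon>')"
    by (rule finite_ex_pos_uniform[OF kernel_operator_component_continuous[OF u \<open>0 < \<epsilon>'\<close>]]) fastforce
  then obtain \<delta> where "0 < \<delta>" and \<delta>: "\<And>v i \<xi>. v \<in> A \<Longrightarrow> wnorm \<rho> (\<lambda>\<xi>. v \<xi> - u \<xi>) < \<delta> \<Longrightarrow>
      \<bar>kernel_operator \<kappa> l1 l2 H v \<xi> $ i - kernel_operator \<kappa> l1 l2 H u \<xi> $ i\<bar> * exp (- \<rho> * \<xi>) \<le> \<epsilon>'"
    by blast
  have "wnorm \<rho> (\<lambda>\<xi>. kernel_operator \<kappa> l1 l2 H v \<xi> - kernel_operator \<kappa> l1 l2 H u \<xi>) \<le> CARD('n) * \<epsilon>'"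
    if "v \<in> A" "wnorm \<rho> (\<lambda>\<xi>. v \<xi> - u \<xi>) < \<delta>" for v
    by (rule wnorm_le) (use \<delta>[OF that] in simp)
  moreover have "CARD('n) * \<epsilon>' < \<epsilon>" using \<epsilon> by (simp add: \<epsilon>'_def)
  ultimately show ?thesis using \<open>0 < \<delta>\<close> by (meson order_le_less_trans)
qed

end

section \<open>The operator T\<close>

lemma linear_bound_if_has_derivative_at_0:
  fixes f :: "'a::real_normed_vector \<Rightarrow> 'b::real_normed_vector"
  assumes S: "compact S" and cont: "continuous_on S f" and "f 0 = 0"
    and deriv: "(f has_derivative f') (at 0 within S)"
  obtains C where "0 \<le> C" "\<And>w. w \<in> S \<Longrightarrow> norm (f w) \<le> C * norm w"
proof -
  obtain \<delta> where \<delta>: "0 < \<delta>" "\<And>w. w \<in> S \<Longrightarrow> norm w < \<delta> \<Longrightarrow> norm (f w - f' w) \<le> norm w"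
    using deriv \<open>f 0 = 0\<close> unfolding has_derivative_within_alt by (metis diff_zero mult_1 zero_less_one)
  obtain K where K: "0 < K" "\<And>w. norm (f' w) \<le> norm w * K"
    using bounded_linear.pos_bounded[OF has_derivative_bounded_linear[OF deriv]] by blast
  obtain M where M: "\<And>w. w \<in> S \<Longrightarrow> norm (f w) \<le> M"
    using compact_imp_bounded[OF compact_continuous_image[OF cont S]] unfolding bounded_iff by blast
  show ?thesis
  proof (rule that[of "K + 1 + \<bar>M\<bar> / \<delta>"])
    show "0 \<le> K + 1 + \<bar>M\<bar> / \<delta>" using K \<delta> by simp
    fix w assume w: "w \<in> S"
    show "norm (f w) \<le> (K + 1 + \<bar>M\<bar> / \<delta>) * norm w"
    proof (cases "norm w < \<delta>")
      case True
      have "norm (f w) \<le> norm (f' w) + norm (f w - f' w)" by (rule norm_triangle_sub)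
      also have "\<dots> \<le> (K + 1) * norm w" using K(2)[of w] \<delta>(2)[OF w True] by (simp add: algebra_simps)
      also have "\<dots> \<le> (K + 1 + \<bar>M\<bar> / \<delta>) * norm w" using \<delta> by (intro mult_right_mono) auto
      finally show ?thesis .
    next
      case False
      have "norm (f w) \<le> \<bar>M\<bar> / \<delta> * \<delta>" using M[OF w] \<delta> by simp
      also have "\<dots> \<le> \<bar>M\<bar> / \<delta> * norm w" using False \<delta> by (intro mult_left_mono) auto
      also have "\<dots> \<le> (K + 1 + \<bar>M\<bar> / \<delta>) * norm w" using K by (intro mult_right_mono) auto
      finally show ?thesis .
    qed
  qed
qed

lemma A_set_bounds:
  assumes u: "u \<in> A_set \<rho> (phi_minus \<nu> L \<gamma> q) (phi_plus k \<nu> L)" and "k \<le> kp"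
  shows "u s \<in> {0..kp}" and "norm (u s) \<le> (\<Sum>j\<in>UNIV. \<bar>k $ j\<bar>)"
    and "norm (u s) \<le> (\<Sum>j\<in>UNIV. \<bar>\<nu> L $ j\<bar>) * exp (L * s)"
proof -
  have "phi_minus \<nu> L \<gamma> q s \<le> u s" "u s \<le> phi_plus k \<nu> L s" using u by (auto simp: A_set_def)
  then have lo: "0 \<le> u s $ j" and hi: "u s $ j \<le> k $ j" "u s $ j \<le> \<nu> L $ j * exp (L * s)" for j
    unfolding less_eq_vec_def phi_minus_def phi_plus_def by (auto dest: spec[of _ j])
  show "u s \<in> {0..kp}"
    using lo hi(1) \<open>k \<le> kp\<close> unfolding atLeastAtMost_iff less_eq_vec_def by (auto intro: order_trans)
  have "norm (u s) \<le> (\<Sum>j\<in>UNIV. \<bar>u s $ j\<bar>)" by (rule norm_le_l1_cart)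
  also have "\<dots> \<le> (\<Sum>j\<in>UNIV. \<bar>k $ j\<bar>)"
    using lo hi(1) by (intro sum_mono) (simp add: order_trans[OF _ abs_ge_self])
  finally show "norm (u s) \<le> (\<Sum>j\<in>UNIV. \<bar>k $ j\<bar>)" .
  have "\<bar>u s $ j\<bar> \<le> \<bar>\<nu> L $ j\<bar> * exp (L * s)" for j
    using lo[of j] hi(2)[of j] mult_right_mono[OF abs_ge_self[of "\<nu> L $ j"] exp_ge_zero[of "L * s"]]
    by linarith
  then have "(\<Sum>j\<in>UNIV. \<bar>u s $ j\<bar>) \<le> (\<Sum>j\<in>UNIV. \<bar>\<nu> L $ j\<bar>) * exp (L * s)"
    unfolding sum_distrib_right by (rule sum_mono)
  then show "norm (u s) \<le> (\<Sum>j\<in>UNIV. \<bar>\<nu> L $ j\<bar>) * exp (L * s)"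
    using norm_le_l1_cart[of "u s"] by linarith
qed

lemma Hfun_abs_le:
  assumes "norm (f w) \<le> C * norm w"
  shows "\<bar>Hfun f \<beta> w i\<bar> \<le> (\<bar>\<beta>\<bar> + C) * norm w"
proof -
  have "\<bar>Hfun f \<beta> w i\<bar> \<le> \<bar>\<beta>\<bar> * \<bar>w $ i\<bar> + \<bar>f w $ i\<bar>"
    unfolding Hfun_def by (metis abs_triangle_ineq abs_mult)
  also have "\<dots> \<le> \<bar>\<beta>\<bar> * norm w + norm (f w)"
    by (intro add_mono mult_left_mono component_le_norm_cart) auto
  finally show ?thesis using assms by (simp add: algebra_simps)
qed

lemma Hfun_bounds_on_A_set:
  fixes kp :: "real^'n"
  assumes f: "continuous_on {0..kp} f" "f 0 = 0" "(f has_derivative f') (at 0 within {0..kp})"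
    and "k \<le> kp"
  obtains M0 M1 where "0 \<le> M0" "0 \<le> M1"
    "\<And>u s i. u \<in> A_set \<rho> (phi_minus \<nu> L \<gamma> q) (phi_plus k \<nu> L) \<Longrightarrow> \<bar>Hfun f \<beta> (u s) i\<bar> \<le> M0"
    "\<And>u s i. u \<in> A_set \<rho> (phi_minus \<nu> L \<gamma> q) (phi_plus k \<nu> L) \<Longrightarrow> \<bar>Hfun f \<beta> (u s) i\<bar> \<le> M1 * exp (L * s)"
proof -
  have "compact {0..kp}" by (simp add: interval_cbox_cart)
  then obtain C where C: "0 \<le> C" "\<And>w. w \<in> {0..kp} \<Longrightarrow> norm (f w) \<le> C * norm w"
    using linear_bound_if_has_derivative_at_0[OF _ f] by blast
  show ?thesis
  proof (rule that[of "(\<bar>\<beta>\<bar> + C) * (\<Sum>j\<in>UNIV. \<bar>k $ j\<bar>)" "(\<bar>\<beta>\<bar> + C) * (\<Sum>j\<in>UNIV. \<bar>\<nu> L $ j\<bar>)"])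
    show "0 \<le> (\<bar>\<beta>\<bar> + C) * (\<Sum>j\<in>UNIV. \<bar>k $ j\<bar>)" "0 \<le> (\<bar>\<beta>\<bar> + C) * (\<Sum>j\<in>UNIV. \<bar>\<nu> L $ j\<bar>)"
      using C(1) by (simp_all add: sum_nonneg)
    fix u s i assume u: "u \<in> A_set \<rho> (phi_minus \<nu> L \<gamma> q) (phi_plus k \<nu> L)"
    note bounds = A_set_bounds[OF u \<open>k \<le> kp\<close>, of s]
    have H: "\<bar>Hfun f \<beta> (u s) i\<bar> \<le> (\<bar>\<beta>\<bar> + C) * norm (u s)"
      by (rule Hfun_abs_le[where f=f, OF C(2)[OF bounds(1)]])
    show "\<bar>Hfun f \<beta> (u s) i\<bar> \<le> (\<bar>\<beta>\<bar> + C) * (\<Sum>j\<in>UNIV. \<bar>k $ j\<bar>)"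
      using H mult_left_mono[OF bounds(2), of "\<bar>\<beta>\<bar> + C"] C(1) by linarith
    show "\<bar>Hfun f \<beta> (u s) i\<bar> \<le> (\<bar>\<beta>\<bar> + C) * (\<Sum>j\<in>UNIV. \<bar>\<nu> L $ j\<bar>) * exp (L * s)"
      using H mult_left_mono[OF bounds(3), of "\<bar>\<beta>\<bar> + C"] C(1) by (simp add: mult.assoc)
  qed
qed

lemma Top_eq_kernel_operator:
  "Top d f c \<beta> = kernel_operator (\<lambda>i. 1 / (d $ i * (lam1 d c \<beta> i + lam2 d c \<beta> i)))
     (lam1 d c \<beta>) (lam2 d c \<beta>) (Hfun f \<beta>)"
  by (simp add: fun_eq_iff Top_def kernel_operator_def kernel_integral_def)

theorem lemma4p6:
  fixes d k km kp :: "real^('n::{finite,linorder})"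
    and f fm fp :: "real^('n::{finite,linorder}) \<Rightarrow> real^('n::{finite,linorder})"
    and J :: "real^('n::{finite,linorder})^('n::{finite,linorder})"
    and b :: "'n::{finite,linorder} \<Rightarrow> nat" and m :: nat
    and \<nu> :: "real \<Rightarrow> real^('n::{finite,linorder})"
    and c Lc \<beta> \<gamma> q \<rho> :: real
  assumes d_pos: "vpos d"
    and hyp1: "H1 d f fm fp k km kp J"
    and hyp2: "H2 d J b m \<nu>"
    and hyp3: "H3 fm fp km kp J \<nu>"
    and c_gt: "c > cstar d J"
    and Lc: "Lc > 0" "Phi d J Lc = c" "\<forall>l. 0 < l \<and> l < Lc \<longrightarrow> Phi d J l \<noteq> c"
    and beta: "\<exists>M<\<beta>. \<forall>u\<in>{0..kp}. \<forall>i j D. pd_in f {0..kp} u i j D \<longrightarrow> \<bar>D\<bar> \<le> M"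
    and lams: "\<forall>i. lam2 d c \<beta> i > lam1 d c \<beta> i \<and> lam1 d c \<beta> i > 2 * Lc"
    and gamma: "1 < \<gamma>" "\<gamma> < 2"
    and q: "q > 1" "\<forall>\<xi> i. phi_minus \<nu> Lc \<gamma> q \<xi> $ i < phi_plus k \<nu> Lc \<xi> $ i"
    and rho: "0 < \<rho>" "\<rho> < Lc"
  shows "(\<forall>u\<in>A_set \<rho> (phi_minus \<nu> Lc \<gamma> q) (phi_plus k \<nu> Lc). in_E \<rho> (Top d f c \<beta> u)) \<and>
         (\<forall>u\<in>A_set \<rho> (phi_minus \<nu> Lc \<gamma> q) (phi_plus k \<nu> Lc). \<forall>\<epsilon>>0. \<exists>\<delta>>0.
            \<forall>v\<in>A_set \<rho> (phi_minus \<nu> Lc \<gamma> q) (phi_plus k \<nu> Lc).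
              wnorm \<rho> (\<lambda>\<xi>. v \<xi> - u \<xi>) < \<delta> \<longrightarrow>
              wnorm \<rho> (\<lambda>\<xi>. Top d f c \<beta> v \<xi> - Top d f c \<beta> u \<xi>) < \<epsilon>)"
proof -
  have f: "continuous_on {0..kp} f" "f 0 = 0" "(f has_derivative (\<lambda>h. J *v h)) (at 0 within {0..kp})"
    and "k \<le> kp" using hyp1 by (auto simp: H1_def)
  obtain M0 M1 where M: "0 \<le> M0" "0 \<le> M1"
    "\<And>u s i. u \<in> A_set \<rho> (phi_minus \<nu> Lc \<gamma> q) (phi_plus k \<nu> Lc) \<Longrightarrow> \<bar>Hfun f \<beta> (u s) i\<bar> \<le> M0"
    "\<And>u s i. u \<in> A_set \<rho> (phi_minus \<nu> Lc \<gamma> q) (phi_plus k \<nu> Lc) \<Longrightarrow> \<bar>Hfun f \<beta> (u s) i\<bar> \<le> M1 * exp (Lc * s)"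
    using Hfun_bounds_on_A_set[OF f \<open>k \<le> kp\<close>] by blast
  interpret kernel_operator_setting "{0..kp}" "Hfun f \<beta>" "A_set \<rho> (phi_minus \<nu> Lc \<gamma> q) (phi_plus k \<nu> Lc)"
    "lam1 d c \<beta>" "lam2 d c \<beta>" \<rho> Lc M0 M1
  proof
    show "compact {0..kp}" by (simp add: interval_cbox_cart)
    show "continuous_on {0..kp} (\<lambda>w. Hfun f \<beta> w i)" for i
      unfolding Hfun_def by (intro continuous_intros f(1))
    show "0 < lam1 d c \<beta> i" "Lc < lam2 d c \<beta> i" for i
      using lams Lc(1) by (smt (verit))+
  qed (use M rho A_set_bounds(1)[OF _ \<open>k \<le> kp\<close>] in \<open>simp_all add: A_set_def\<close>)
  show ?thesis
    unfolding Top_eq_kernel_operator using kernel_operator_in_E kernel_operator_continuous by blast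
qed

end
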